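(* Let $n\equiv 0\pmod 3$. If there exist a ${}^{1}\mathrm{cDCQS}(g^n:2)$ and an $\mathrm{RDSQS}(g+2)$, then there exists an $\mathrm{mcDSQS}(gn+2)$.
   Context: A Steiner triple system $\mathrm{STS}(v)$: a $v$-set with $3$-subsets (blocks) such that each pair lies in exactly one block. A partial parallel class (PPC) of a set $Y$ is a set of pairwise disjoint blocks contained in $Y$; a parallel class (PC) of $Y$ is a PPC whose union is $Y$; a design is resolvable if its blocks partition into PCs of its point set. $\chi'(v)$ is the minimum over all $\mathrm{STS}(v)$ of the least number of PPCs into which its block set can be partitioned; an $\mathrm{STS}(v)$ admitting a partition into $\chi'(v)$ PPCs is an $\mathrm{mcSTS}(v)$. An $\mathrm{SQS}(v)$ is a $v$-set $X$ with $4$-subsets such that each $3$-subset lies in exactly one block; its derived design at $x$ is $\{B\setminus\{x\}:x\in B\}$ on $X\setminus\{x\}$. An $\mathrm{mcDSQS}(v)$ is an $\mathrm{SQS}(v)$ all of whose derived designs are $\mathrm{mcSTS}(v-1)$; an $\mathrm{RDSQS}(v)$ is an $\mathrm{SQS}(v)$ all of whose derived designs are resolvable. An incomplete $\mathrm{STS}(v,h)$ is $(Y,H,\mathcal{B})$, $|Y|=v$, $|H|=h$, each pair of $Y$ not inside $H$ in exactly one block and no pair inside $H$ in a block; it is a $\mathrm{gcSTS}(v,h)$ if $\mathcal{B}$ partitions into $\chi'(v)$ PPCs of $Y$ of which $\chi'(v)-\frac{v-h}{2}$ are PPCs of $Y\setminus H$. A $\mathrm{GDD}(2,3,gn)$ of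 type $g^n$ is $(Z,\mathcal{G},\mathcal{B})$, $\mathcal{G}$ a partition of $Z$ into $n$ groups of size $g$, $\mathcal{B}$ triples meeting each group in at most one point with each pair from distinct groups in exactly one block. For $g$ even, it is good colorable ($\mathrm{gcGDD}$) if $\mathcal{B}=\big(\bigcup_{G\in\mathcal{G},1\le i\le g/2}P_G^i\big)\cup P_H^*$ (a partition) where each $P_G^i$ is a PPC of $Z\setminus G$ and $P_H^*$ is a PPC of $Z\setminus H$ for some $H\in\mathcal{G}$, the special group. A $\mathrm{CQS}(g^n:s)$ is $(X,S,\mathcal{G},\mathcal{A})$ with $|S|=s$, $\mathcal{G}$ a partition of $X\setminus S$ into $n$ groups of size $g$, $\mathcal{A}$ a set of $4$-subsets such that every $3$-subset not contained in any $S\cup G$ lies in exactly one block and none contained in some $S\cup G$ lies in a block. With $\mathcal{A}_x=\{A\setminus\{x\}:x\in A\in\mathcal{A}\}$, a ${}^{1}\mathrm{cDCQS}(g^n:2)$ (for $g$ even) is a $\mathrm{CQS}(g^n:2)$ such that for each $x\in G\in\mathcal{G}$, $(X\setminus\{x\},(G\cup S)\setminus\{x\},\mathcal{A}_x)$ is a $\mathrm{gcSTS}(gn+1,g+1)$, and for each $x\in S$, $(X\setminus S,\mathcal{G},\mathcal{A}_x)$ is a $\mathrm{gcGDD}(2,3,gn)$ of type $g^n$, with the same special group for both points of $S$. *)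

theory Defs
  imports Main
begin

definition is_STS :: "'a set \<Rightarrow> 'a set set \<Rightarrow> bool" where
  "is_STS X B \<longleftrightarrow> finite X \<and> (\<forall>b\<in>B. b \<subseteq> X \<and> card b = 3) \<and>
     (\<forall>x\<in>X. \<forall>y\<in>X. x \<noteq> y \<longrightarrow> (\<exists>!b. b \<in> B \<and> {x, y} \<subseteq> b))"

definition is_PPC :: "'a set \<Rightarrow> 'a set set \<Rightarrow> bool" where
  "is_PPC Y P \<longleftrightarrow> (\<forall>b\<in>P. b \<subseteq> Y) \<and> pairwise disjnt P"

definition is_PC :: "'a set \<Rightarrow> 'a set set \<Rightarrow> bool" where
  "is_PC Y P \<longleftrightarrow> is_PPC Y P \<and> \<Union>P = Y"

definition PPC_partition :: "'a set \<Rightarrow> 'a set set \<Rightarrow> nat \<Rightarrow> bool" where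
  "PPC_partition Y B k \<longleftrightarrow>
     (\<exists>f :: 'a set \<Rightarrow> nat. (\<forall>b\<in>B. f b < k) \<and> (\<forall>i<k. is_PPC Y {b\<in>B. f b = i}))"

definition resolvable :: "'a set \<Rightarrow> 'a set set \<Rightarrow> bool" where
  "resolvable X B \<longleftrightarrow> (\<exists>R. (\<forall>P\<in>R. is_PC X P) \<and> \<Union>R = B \<and> pairwise disjnt R)"

text \<open>chi'(v): minimum over all STS(v) of the least number of PPCs partitioning the blocks.
  (Designs are taken on point sets of naturals; all notions are isomorphism invariant.)\<close>
definition chi' :: "nat \<Rightarrow> nat" where
  "chi' v = (LEAST k. \<exists>(X :: nat set) B. is_STS X B \<and> card X = v \<and> PPC_partition X B k)"

definition is_mcSTS :: "nat \<Rightarrow> 'a set \<Rightarrow> 'a set set \<Rightarrow> bool" where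
  "is_mcSTS v X B \<longleftrightarrow> is_STS X B \<and> card X = v \<and> PPC_partition X B (chi' v)"

definition is_SQS :: "nat \<Rightarrow> 'a set \<Rightarrow> 'a set set \<Rightarrow> bool" where
  "is_SQS v X A \<longleftrightarrow> finite X \<and> card X = v \<and> (\<forall>a\<in>A. a \<subseteq> X \<and> card a = 4) \<and>
     (\<forall>T. T \<subseteq> X \<and> card T = 3 \<longrightarrow> (\<exists>!a. a \<in> A \<and> T \<subseteq> a))"

definition derived :: "'a set set \<Rightarrow> 'a \<Rightarrow> 'a set set" where
  "derived A x = {a - {x} | a. a \<in> A \<and> x \<in> a}"

definition is_mcDSQS :: "nat \<Rightarrow> 'a set \<Rightarrow> 'a set set \<Rightarrow> bool" where
  "is_mcDSQS v X A \<longleftrightarrow> is_SQS v X A \<and> (\<forall>x\<in>X. is_mcSTS (v - 1) (X - {x}) (derived A x))"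

definition is_RDSQS :: "nat \<Rightarrow> 'a set \<Rightarrow> 'a set set \<Rightarrow> bool" where
  "is_RDSQS v X A \<longleftrightarrow> is_SQS v X A \<and> (\<forall>x\<in>X. resolvable (X - {x}) (derived A x))"

definition is_ISTS :: "nat \<Rightarrow> nat \<Rightarrow> 'a set \<Rightarrow> 'a set \<Rightarrow> 'a set set \<Rightarrow> bool" where
  "is_ISTS v h Y H B \<longleftrightarrow> finite Y \<and> card Y = v \<and> H \<subseteq> Y \<and> card H = h \<and>
     (\<forall>b\<in>B. b \<subseteq> Y \<and> card b = 3) \<and>
     (\<forall>x\<in>Y. \<forall>y\<in>Y. x \<noteq> y \<and> \<not> {x, y} \<subseteq> H \<longrightarrow> (\<exists>!b. b \<in> B \<and> {x, y} \<subseteq> b)) \<and>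
     (\<forall>x\<in>H. \<forall>y\<in>H. x \<noteq> y \<longrightarrow> \<not> (\<exists>b\<in>B. {x, y} \<subseteq> b))"

definition is_gcSTS :: "nat \<Rightarrow> nat \<Rightarrow> 'a set \<Rightarrow> 'a set \<Rightarrow> 'a set set \<Rightarrow> bool" where
  "is_gcSTS v h Y H B \<longleftrightarrow> is_ISTS v h Y H B \<and>
     (\<exists>f :: 'a set \<Rightarrow> nat. (\<forall>b\<in>B. f b < chi' v) \<and>
        (\<forall>i < chi' v. is_PPC Y {b\<in>B. f b = i}) \<and>
        (\<forall>i < chi' v - (v - h) div 2. is_PPC (Y - H) {b\<in>B. f b = i}))"

definition is_group_partition :: "nat \<Rightarrow> nat \<Rightarrow> 'a set \<Rightarrow> 'a set set \<Rightarrow> bool" where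
  "is_group_partition g n Z Gs \<longleftrightarrow> \<Union>Gs = Z \<and> pairwise disjnt Gs \<and> {} \<notin> Gs \<and>
     finite Gs \<and> card Gs = n \<and> (\<forall>G\<in>Gs. card G = g)"

definition is_GDD :: "nat \<Rightarrow> nat \<Rightarrow> 'a set \<Rightarrow> 'a set set \<Rightarrow> 'a set set \<Rightarrow> bool" where
  "is_GDD g n Z Gs B \<longleftrightarrow> finite Z \<and> is_group_partition g n Z Gs \<and>
     (\<forall>b\<in>B. b \<subseteq> Z \<and> card b = 3 \<and> (\<forall>G\<in>Gs. card (b \<inter> G) \<le> 1)) \<and>
     (\<forall>x\<in>Z. \<forall>y\<in>Z. x \<noteq> y \<and> \<not> (\<exists>G\<in>Gs. x \<in> G \<and> y \<in> G) \<longrightarrow> (\<exists>!b. b \<in> B \<and> {x, y} \<subseteq> b))"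

text \<open>Good colorable GDD with special group H: B is partitioned into the classes
  P G i (G a group, 1 <= i <= g/2, indexed here by i < g div 2), each a PPC of Z - G,
  and Pstar, a PPC of Z - H.\<close>
definition is_gcGDD :: "nat \<Rightarrow> nat \<Rightarrow> 'a set \<Rightarrow> 'a set set \<Rightarrow> 'a set set \<Rightarrow> 'a set \<Rightarrow> bool" where
  "is_gcGDD g n Z Gs B H \<longleftrightarrow> even g \<and> is_GDD g n Z Gs B \<and> H \<in> Gs \<and>
     (\<exists>(P :: 'a set \<Rightarrow> nat \<Rightarrow> 'a set set) Pstar.
        (\<forall>G\<in>Gs. \<forall>i < g div 2. P G i \<subseteq> B \<and> is_PPC (Z - G) (P G i)) \<and>
        Pstar \<subseteq> B \<and> is_PPC (Z - H) Pstar \<and>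
        B = (\<Union>G\<in>Gs. \<Union>i\<in>{..<g div 2}. P G i) \<union> Pstar \<and>
        (\<forall>G\<in>Gs. \<forall>i < g div 2. \<forall>G'\<in>Gs. \<forall>j < g div 2.
            (G, i) \<noteq> (G', j) \<longrightarrow> P G i \<inter> P G' j = {}) \<and>
        (\<forall>G\<in>Gs. \<forall>i < g div 2. P G i \<inter> Pstar = {}))"

definition is_CQS :: "nat \<Rightarrow> nat \<Rightarrow> nat \<Rightarrow> 'a set \<Rightarrow> 'a set \<Rightarrow> 'a set set \<Rightarrow> 'a set set \<Rightarrow> bool" where
  "is_CQS g n s X S Gs A \<longleftrightarrow> finite X \<and> S \<subseteq> X \<and> card S = s \<and>
     is_group_partition g n (X - S) Gs \<and>
     (\<forall>a\<in>A. a \<subseteq> X \<and> card a = 4) \<and>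
     (\<forall>T. T \<subseteq> X \<and> card T = 3 \<and> \<not> (\<exists>G\<in>Gs. T \<subseteq> S \<union> G) \<longrightarrow> (\<exists>!a. a \<in> A \<and> T \<subseteq> a)) \<and>
     (\<forall>T. T \<subseteq> X \<and> card T = 3 \<and> (\<exists>G\<in>Gs. T \<subseteq> S \<union> G) \<longrightarrow> \<not> (\<exists>a\<in>A. T \<subseteq> a))"

definition is_1cDCQS :: "nat \<Rightarrow> nat \<Rightarrow> 'a set \<Rightarrow> 'a set \<Rightarrow> 'a set set \<Rightarrow> 'a set set \<Rightarrow> bool" where
  "is_1cDCQS g n X S Gs A \<longleftrightarrow> even g \<and> is_CQS g n 2 X S Gs A \<and>
     (\<forall>G\<in>Gs. \<forall>x\<in>G. is_gcSTS (g * n + 1) (g + 1) (X - {x}) ((G \<union> S) - {x}) (derived A x)) \<and>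
     (\<exists>H\<in>Gs. \<forall>x\<in>S. is_gcGDD g n (X - S) Gs (derived A x) H)"

end

theory Submission
  imports Defs "HOL-Library.Disjoint_Sets"
begin

(* Fill every hole S \<union> G of the candelabra system with a copy of the RDSQS(g+2); the result
   is an SQS(gn+2).  Its derived design at x consists of the derived design of the CQS at x and
   the derived designs of the holes through x, each a resolvable STS(g+1) with g/2 parallel
   classes.  Counting blocks, an STS(v) with v = 1 (mod 6) needs at least (v+1)/2 partial
   parallel classes, so chi'(gn+1) >= gn/2 + 1 because 6 divides gn.  At a point of S, the
   i-th parallel class of the hole S \<union> G is merged with the colour class P_G^i of the good
   colouring of the GDD, which avoids G; together with P^* this gives gn/2 + 1 classes.  At a
   point of a group G, the g/2 parallel classes of the hole are merged with colour classes of
   the gcSTS that avoid G \<union> S, of which there are enough by the bound on chi'. *)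

lemma is_PPC_subset: "is_PPC Y P \<Longrightarrow> Q \<subseteq> P \<Longrightarrow> is_PPC Y Q"
  unfolding is_PPC_def by (meson pairwise_subset subsetD)

lemma is_PPC_mono: "is_PPC Y P \<Longrightarrow> Y \<subseteq> Y' \<Longrightarrow> is_PPC Y' P"
  by (auto simp: is_PPC_def)

lemma PC_imp_PPC: "is_PC Y P \<Longrightarrow> is_PPC Y P"
  by (simp add: is_PC_def)

lemma is_PPC_Un:
  assumes "is_PPC Y1 P1" "is_PPC Y2 P2" "Y1 \<inter> Y2 = {}"
  shows "is_PPC (Y1 \<union> Y2) (P1 \<union> P2)"
proof -
  have "disjnt b1 b2" if "b1 \<in> P1" "b2 \<in> P2" for b1 b2
    using assms that unfolding is_PPC_def disjnt_def by blast
  then show ?thesis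
    using assms unfolding is_PPC_def pairwise_def by (metis UnE disjnt_sym le_supI1 le_supI2)
qed

lemma card_Union_PPC:
  assumes "is_PPC Y P" "\<forall>b\<in>P. card b = 3"
  shows "card (\<Union>P) = 3 * card P"
proof -
  have "card (\<Union>P) = sum card P"
    using assms by (intro card_Union_disjoint) (auto simp: is_PPC_def card_ge_0_finite)
  then show ?thesis
    using assms(2) by simp
qed

lemma PPC_partition_cover:
  assumes "finite C" "card C \<le> k" "\<forall>P\<in>C. is_PPC Y P" "B \<subseteq> \<Union>C"
  shows "PPC_partition Y B k"
proof -
  obtain e where e: "bij_betw e {0..<card C} C"
    using ex_bij_betw_nat_finite[OF assms(1)] by blast
  define f where "f b = (LEAST i. i < card C \<and> b \<in> e i)" for b
  have f: "f b < card C \<and> b \<in> e (f b)" if b: "b \<in> B" for b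
  proof -
    obtain P where "P \<in> C" "b \<in> P"
      using b assms(4) by blast
    moreover have "P \<in> e ` {0..<card C}"
      using bij_betw_imp_surj_on[OF e] \<open>P \<in> C\<close> by simp
    ultimately have "\<exists>i. i < card C \<and> b \<in> e i"
      by auto
    then show ?thesis
      unfolding f_def by (rule LeastI_ex)
  qed
  have "is_PPC Y {b \<in> B. f b = i}" for i
  proof (cases "i < card C")
    case True
    then have "is_PPC Y (e i)"
      using assms(3) bij_betwE[OF e] by simp
    then show ?thesis
      by (rule is_PPC_subset) (use f in auto)
  next
    case False
    then have no_blocks: "{b \<in> B. f b = i} = {}"
      using f by fastforce
    show ?thesis
      unfolding no_blocks by (simp add: is_PPC_def)
  qed
  moreover have "f b < k" if "b \<in> B" for b
    using f[OF that] assms(2) by linarith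
  ultimately show ?thesis
    unfolding PPC_partition_def by blast
qed

lemma PPC_partition_singletons:
  assumes "finite B" "\<forall>b\<in>B. b \<subseteq> Y"
  shows "PPC_partition Y B (card B)"
  by (rule PPC_partition_cover[of "(\<lambda>b. {b}) ` B"])
    (use assms in \<open>auto simp: is_PPC_def card_image_le\<close>)

lemma STS_finite_blocks: "is_STS X B \<Longrightarrow> finite B"
  unfolding is_STS_def by (meson PowI finite_Pow_iff finite_subset subsetI)

lemma STS_card_blocks:
  assumes "is_STS X B"
  shows "6 * card B = card X * (card X - 1)"
proof -
  define pairs where "pairs b = {p. p \<subseteq> b \<and> card p = 2}" for b :: "'a set"
  have fin: "finite X" and blocks: "\<forall>b\<in>B. b \<subseteq> X \<and> card b = 3"
    and unique: "\<forall>x\<in>X. \<forall>y\<in>X. x \<noteq> y \<longrightarrow> (\<exists>!b. b \<in> B \<and> {x, y} \<subseteq> b)"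
    using assms by (auto simp: is_STS_def)
  have finite_block: "finite b" if "b \<in> B" for b
    using that blocks fin finite_subset by blast
  have "{p. p \<subseteq> X \<and> card p = 2} = (\<Union>b\<in>B. pairs b)"
  proof (intro equalityI subsetI)
    fix p assume "p \<in> {p. p \<subseteq> X \<and> card p = 2}"
    then obtain x y where "p = {x, y}" "x \<noteq> y" "x \<in> X" "y \<in> X"
      by (auto simp: card_2_iff)
    moreover obtain b where "b \<in> B" "{x, y} \<subseteq> b"
      using unique \<open>x \<in> X\<close> \<open>y \<in> X\<close> \<open>x \<noteq> y\<close> by blast
    ultimately show "p \<in> (\<Union>b\<in>B. pairs b)"
      by (auto simp: pairs_def)
  qed (use blocks in \<open>auto simp: pairs_def\<close>)
  moreover have "card (\<Union>b\<in>B. pairs b) = (\<Sum>b\<in>B. card (pairs b))"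
  proof (rule card_UN_disjoint)
    show "finite B" using STS_finite_blocks[OF assms] .
    show "\<forall>b\<in>B. finite (pairs b)"
      using finite_block by (auto simp: pairs_def)
    show "\<forall>b\<in>B. \<forall>b'\<in>B. b \<noteq> b' \<longrightarrow> pairs b \<inter> pairs b' = {}"
    proof (intro ballI impI equals0I)
      fix b b' p assume "b \<in> B" "b' \<in> B" "b \<noteq> b'" "p \<in> pairs b \<inter> pairs b'"
      moreover obtain x y where "p = {x, y}" "x \<noteq> y"
        using \<open>p \<in> pairs b \<inter> pairs b'\<close> by (auto simp: pairs_def card_2_iff)
      moreover have "x \<in> X" "y \<in> X"
        using calculation blocks by (auto simp: pairs_def)
      ultimately show False
        using unique by (auto simp: pairs_def)
    qed
  qed
  moreover have "card (pairs b) = 3" if "b \<in> B" for b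
    using n_subsets[OF finite_block[OF that], of 2] blocks that by (simp add: pairs_def choose_two)
  ultimately have "card X * (card X - 1) div 2 = 3 * card B"
    using n_subsets[OF fin, of 2] by (simp add: choose_two)
  moreover have "even (card X * (card X - 1))"
    by (cases "even (card X)") auto
  ultimately show ?thesis
    using even_two_times_div_two[of "card X * (card X - 1)"] by linarith
qed

lemma card_PPC_STS_le:
  assumes "is_STS X B" "is_PPC X P" "P \<subseteq> B" "card X mod 3 = 1"
  shows "3 * card P \<le> card X - 1"
proof -
  have "\<forall>b\<in>P. card b = 3"
    using assms(1,3) by (auto simp: is_STS_def)
  then have "3 * card P = card (\<Union>P)"
    using card_Union_PPC[OF assms(2)] by simp
  also have "\<dots> \<le> card X"
    using assms(1,2) by (intro card_mono) (auto simp: is_STS_def is_PPC_def)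
  finally show ?thesis
    using assms(4) by presburger
qed

lemma STS_PPC_partition_lower_bound:
  assumes "is_STS X B" "PPC_partition X B k" "card X mod 3 = 1" "1 < card X"
  shows "card X \<le> 2 * k"
proof -
  obtain f where f: "\<forall>b\<in>B. f b < k" "\<forall>i<k. is_PPC X {b\<in>B. f b = i}"
    using assms(2) by (auto simp: PPC_partition_def)
  have classes: "(\<Union>i<k. {b\<in>B. f b = i}) = B"
    using f(1) by auto
  have "card (\<Union>i<k. {b\<in>B. f b = i}) = (\<Sum>i<k. card {b\<in>B. f b = i})"
    using STS_finite_blocks[OF assms(1)] by (intro card_UN_disjoint) auto
  then have "card B = (\<Sum>i<k. card {b\<in>B. f b = i})"
    unfolding classes .
  then have "3 * card B = (\<Sum>i<k. 3 * card {b\<in>B. f b = i})"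
    by (simp add: sum_distrib_left)
  also have "\<dots> \<le> (\<Sum>i<k. card X - 1)"
    using card_PPC_STS_le[OF assms(1) _ _ assms(3)] f(2) by (intro sum_mono) auto
  finally have "3 * card B \<le> k * (card X - 1)"
    by simp
  then have "card X * (card X - 1) \<le> 2 * k * (card X - 1)"
    using STS_card_blocks[OF assms(1)] by (simp only: mult.assoc)
  then show ?thesis
    using assms(4) by simp
qed

lemma chi'_lower_bound:
  assumes "is_STS (X :: nat set) B" "card X = v" "v mod 6 = 1" "1 < v"
  shows "v + 1 \<le> 2 * chi' v"
proof -
  \<comment> \<open>The singleton partition shows that the LEAST defining chi' v is attained.\<close>
  have "PPC_partition X B (card B)"
    using assms(1) STS_finite_blocks by (intro PPC_partition_singletons) (auto simp: is_STS_def)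
  then have "\<exists>k. \<exists>(X :: nat set) B. is_STS X B \<and> card X = v \<and> PPC_partition X B k"
    using assms(1,2) by blast
  then have "\<exists>(X :: nat set) B. is_STS X B \<and> card X = v \<and> PPC_partition X B (chi' v)"
    unfolding chi'_def by (rule LeastI_ex)
  then obtain X' :: "nat set" and B' where
    X': "is_STS X' B'" "card X' = v" "PPC_partition X' B' (chi' v)"
    by blast
  have "v mod 3 = 1"
    using assms(3) by presburger
  then have "v \<le> 2 * chi' v"
    using STS_PPC_partition_lower_bound[OF X'(1,3)] X'(2) assms(4) by simp
  then show ?thesis
    using assms(3) by presburger
qed

lemma resolution_enumeration:
  assumes "is_STS W B" "resolvable W B" "card W = 2 * q + 1"
  shows "\<exists>\<rho>. (\<forall>i<q. is_PPC W (\<rho> i)) \<and> B = (\<Union>i<q. \<rho> i)"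
proof -
  obtain R where R: "\<forall>P\<in>R. is_PC W P" "\<Union>R = B" "pairwise disjnt R"
    using assms(2) by (auto simp: resolvable_def)
  have finB: "finite B"
    using STS_finite_blocks[OF assms(1)] .
  have "finite R"
    using finB R(2) by (metis finite_UnionD)
  have class_size: "3 * card P = card W" if "P \<in> R" for P
  proof -
    have "\<forall>b\<in>P. card b = 3"
      using that R(2) assms(1) by (auto simp: is_STS_def)
    then show ?thesis
      using card_Union_PPC[OF PC_imp_PPC] R(1) that by (metis is_PC_def)
  qed
  have "card B = sum card R"
    using card_Union_disjoint[OF R(3)] R(2) finB by (metis Union_upper finite_subset)
  then have "3 * card B = (\<Sum>P\<in>R. 3 * card P)"
    by (simp add: sum_distrib_left)
  also have "\<dots> = card R * card W"
    using class_size by simp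
  finally have "2 * (card R * card W) = card W * (card W - 1)"
    using STS_card_blocks[OF assms(1)] by linarith
  then have "card W * (2 * card R) = card W * (2 * q)"
    using assms(3) by (metis add_diff_cancel_right' mult.left_commute mult.commute)
  then have "card R = q"
    using assms(3) by (simp only: mult_cancel1) simp
  then obtain \<rho> where \<rho>: "bij_betw \<rho> {0..<q} R"
    using ex_bij_betw_nat_finite[OF \<open>finite R\<close>] by blast
  then have "\<rho> ` {..<q} = R"
    by (simp add: bij_betw_def atLeast0LessThan)
  then show ?thesis
    using R(1,2) by (intro exI[of _ \<rho>]) (auto simp: is_PC_def)
qed

lemma derived_STS:
  assumes "is_SQS v X A" "x \<in> X"
  shows "is_STS (X - {x}) (derived A x)"
proof -
  have fin: "finite X" and blocks: "\<forall>a\<in>A. a \<subseteq> X \<and> card a = 4"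
    and triples: "\<forall>T. T \<subseteq> X \<and> card T = 3 \<longrightarrow> (\<exists>!a. a \<in> A \<and> T \<subseteq> a)"
    using assms(1) by (auto simp: is_SQS_def)
  have "b \<subseteq> X - {x} \<and> card b = 3" if b: "b \<in> derived A x" for b
  proof -
    obtain a where a: "b = a - {x}" "a \<in> A" "x \<in> a"
      using b by (auto simp: derived_def)
    then have "finite a"
      using blocks fin finite_subset by blast
    then show ?thesis
      using blocks a by auto
  qed
  moreover have "\<exists>!b. b \<in> derived A x \<and> {y, z} \<subseteq> b"
    if "y \<in> X - {x}" "z \<in> X - {x}" "y \<noteq> z" for y z
  proof -
    have "{x, y, z} \<subseteq> X" "card {x, y, z} = 3"
      using that assms(2) by auto
    then have "\<exists>!a. a \<in> A \<and> {x, y, z} \<subseteq> a"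
      using triples by blast
    moreover have "b \<in> derived A x \<and> {y, z} \<subseteq> b \<longleftrightarrow>
        (\<exists>a. a \<in> A \<and> {x, y, z} \<subseteq> a \<and> b = a - {x})" for b
      using that by (auto simp: derived_def)
    ultimately show ?thesis
      by (metis (no_types, lifting))
  qed
  ultimately show ?thesis
    using fin by (simp add: is_STS_def)
qed

lemma ex1_image_iff:
  assumes "inj_on f D" "A \<subseteq> D"
  shows "(\<exists>!y. y \<in> f ` A \<and> P y) \<longleftrightarrow> (\<exists>!x. x \<in> A \<and> P (f x))"
  using assms unfolding inj_on_def by blast

lemma inj_on_image_subset_iff:
  assumes "inj_on h Y" "A \<subseteq> Y" "B \<subseteq> Y"
  shows "h ` A \<subseteq> h ` B \<longleftrightarrow> A \<subseteq> B"
proof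
  show "A \<subseteq> B" if "h ` A \<subseteq> h ` B"
  proof
    fix x assume "x \<in> A"
    then have "h x \<in> h ` B"
      using that by blast
    then show "x \<in> B"
      using inj_on_image_mem_iff[OF assms(1)] \<open>x \<in> A\<close> assms(2,3) by blast
  qed
qed (rule image_mono)

lemma SQS_image:
  assumes "is_SQS v Y A" "bij_betw h Y Z"
  shows "is_SQS v Z ((`) h ` A)"
proof -
  have inj: "inj_on h Y" and Z: "Z = h ` Y"
    using assms(2) by (auto simp: bij_betw_def)
  have blocks: "\<forall>a\<in>A. a \<subseteq> Y \<and> card a = 4"
    using assms(1) by (simp add: is_SQS_def)
  have "\<exists>!a'. a' \<in> (`) h ` A \<and> T \<subseteq> a'" if T: "T \<subseteq> Z" "card T = 3" for T
  proof -
    obtain T' where T': "T' \<subseteq> Y" "T = h ` T'"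
      using T(1) Z subset_image_iff by metis
    have "card T' = 3"
      using T(2) T' card_image inj_on_subset[OF inj] by metis
    have pointwise: "(a \<in> A \<and> T \<subseteq> h ` a) = (a \<in> A \<and> T' \<subseteq> a)" for a
      using inj_on_image_subset_iff[OF inj T'(1)] blocks T'(2) by blast
    have "(\<exists>!a'. a' \<in> (`) h ` A \<and> T \<subseteq> a') \<longleftrightarrow> (\<exists>!a. a \<in> A \<and> T \<subseteq> h ` a)"
      by (rule ex1_image_iff[OF inj_on_image_Pow[OF inj]]) (use blocks in auto)
    also have "\<dots> \<longleftrightarrow> (\<exists>!a. a \<in> A \<and> T' \<subseteq> a)"
      unfolding pointwise ..
    finally show ?thesis
      using assms(1) T'(1) \<open>card T' = 3\<close> by (simp add: is_SQS_def)
  qed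
  moreover have "\<forall>a'\<in>(`) h ` A. a' \<subseteq> Z \<and> card a' = 4"
    using blocks inj Z by (auto simp: card_image inj_on_subset)
  ultimately show ?thesis
    using assms(1) bij_betw_same_card[OF assms(2)] bij_betw_finite[OF assms(2)]
    by (simp add: is_SQS_def)
qed

lemma derived_image:
  assumes "inj_on h Y" "\<forall>a\<in>A. a \<subseteq> Y" "y \<in> Y"
  shows "derived ((`) h ` A) (h y) = (`) h ` derived A y"
proof -
  have mem: "h y \<in> h ` a \<longleftrightarrow> y \<in> a" and diff: "h ` a - {h y} = h ` (a - {y})"
    if "a \<in> A" for a
    using that assms inj_on_image_mem_iff inj_on_image_set_diff[of h Y a "{y}"] by auto
  show ?thesis
  proof (intro equalityI subsetI)
    fix b assume "b \<in> derived ((`) h ` A) (h y)"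
    then obtain a where "a \<in> A" "h y \<in> h ` a" "b = h ` a - {h y}"
      by (auto simp: derived_def)
    then show "b \<in> (`) h ` derived A y"
      using mem diff by (auto simp: derived_def)
  next
    fix b assume "b \<in> (`) h ` derived A y"
    then obtain a where "a \<in> A" "y \<in> a" "b = h ` (a - {y})"
      by (auto simp: derived_def)
    then show "b \<in> derived ((`) h ` A) (h y)"
      using mem diff unfolding derived_def by blast
  qed
qed

lemma resolvable_image:
  assumes "inj_on h W" "resolvable W B"
  shows "resolvable (h ` W) ((`) h ` B)"
proof -
  obtain R where R: "\<forall>P\<in>R. is_PC W P" "\<Union>R = B" "pairwise disjnt R"
    using assms(2) by (auto simp: resolvable_def)
  have "is_PC (h ` W) ((`) h ` P)" if "P \<in> R" for P
  proof -
    have "\<forall>b\<in>P. b \<subseteq> W" "pairwise disjnt P" "\<Union>P = W"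
      using R(1) that by (auto simp: is_PC_def is_PPC_def)
    then show ?thesis
      using assms(1) disjoint_image[of h P] by (auto simp: is_PC_def is_PPC_def)
  qed
  moreover have "pairwise disjnt ((`) ((`) h) ` R)"
  proof (rule disjoint_image[OF _ R(3)])
    have "B \<subseteq> Pow W"
      using R(1,2) by (auto simp: is_PC_def is_PPC_def)
    then show "inj_on ((`) h) (\<Union>R)"
      using R(2) inj_on_image_Pow[OF assms(1)] inj_on_subset by metis
  qed
  moreover have "\<Union>((`) ((`) h) ` R) = (`) h ` B"
    using R(2) by auto
  ultimately show ?thesis
    unfolding resolvable_def by (metis imageE)
qed

lemma RDSQS_image:
  assumes "is_RDSQS v Y A" "bij_betw h Y Z"
  shows "is_RDSQS v Z ((`) h ` A)"
proof -
  have inj: "inj_on h Y" and Z: "Z = h ` Y"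
    using assms(2) by (auto simp: bij_betw_def)
  have "resolvable (Z - {h y}) (derived ((`) h ` A) (h y))" if "y \<in> Y" for y
  proof -
    have "Z - {h y} = h ` (Y - {y})"
      using Z inj that by (simp add: inj_on_image_set_diff)
    moreover have "derived ((`) h ` A) (h y) = (`) h ` derived A y"
      using assms(1) inj that by (intro derived_image) (auto simp: is_RDSQS_def is_SQS_def)
    moreover have "resolvable (Y - {y}) (derived A y)"
      using assms(1) that by (simp add: is_RDSQS_def)
    ultimately show ?thesis
      using inj inj_on_subset resolvable_image by (metis Diff_subset)
  qed
  then show ?thesis
    using assms SQS_image Z by (auto simp: is_RDSQS_def)
qed

lemma ex_RDSQS_on:
  assumes "is_RDSQS v Y A" "finite Z" "card Z = v"
  shows "\<exists>C. is_RDSQS v Z C"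
proof -
  obtain h where "bij_betw h Y Z"
    using assms finite_same_card_bij by (metis is_RDSQS_def is_SQS_def)
  then show ?thesis
    using RDSQS_image[OF assms(1)] by blast
qed

lemma CQS_hole_card:
  assumes "is_CQS g n s X S Gs A" "G \<in> Gs"
  shows "finite (S \<union> G)" "card (S \<union> G) = g + s"
proof -
  have gp: "is_group_partition g n (X - S) Gs" and "S \<subseteq> X" "finite X" "card S = s"
    using assms(1) by (simp_all add: is_CQS_def)
  then have "G \<subseteq> X - S" "card G = g"
    using assms(2) by (auto simp: is_group_partition_def)
  then show "finite (S \<union> G)"
    using \<open>S \<subseteq> X\<close> \<open>finite X\<close> finite_subset by blast
  moreover have "S \<inter> G = {}"
    using \<open>G \<subseteq> X - S\<close> by blast
  ultimately show "card (S \<union> G) = g + s"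
    using card_Un_disjoint[of S G] \<open>card G = g\<close> \<open>card S = s\<close> by simp
qed

locale CQS_filling =
  fixes g n :: nat and X S :: "'a set" and Gs A :: "'a set set" and C :: "'a set \<Rightarrow> 'a set set"
  assumes CQS: "is_CQS g n 2 X S Gs A"
    and even_g: "even g"
    and hole_RDSQS: "G \<in> Gs \<Longrightarrow> is_RDSQS (g + 2) (S \<union> G) (C G)"
begin

definition filled :: "'a set set" where
  "filled = A \<union> (\<Union>G\<in>Gs. C G)"

lemma finite_X: "finite X"
  using CQS by (simp add: is_CQS_def)

lemma S_subset: "S \<subseteq> X"
  using CQS by (simp add: is_CQS_def)

lemma card_S: "card S = 2"
  using CQS by (simp add: is_CQS_def)

lemma groups: "is_group_partition g n (X - S) Gs"
  using CQS by (simp add: is_CQS_def)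

lemma CQS_block: "a \<in> A \<Longrightarrow> a \<subseteq> X \<and> card a = 4"
  using CQS unfolding is_CQS_def by (elim conjE) blast

lemma CQS_triple_unique:
  assumes "T \<subseteq> X" "card T = 3" "\<forall>G\<in>Gs. \<not> T \<subseteq> S \<union> G"
  shows "\<exists>!a. a \<in> A \<and> T \<subseteq> a"
proof -
  have "\<forall>T. T \<subseteq> X \<and> card T = 3 \<and> \<not> (\<exists>G\<in>Gs. T \<subseteq> S \<union> G) \<longrightarrow> (\<exists>!a. a \<in> A \<and> T \<subseteq> a)"
    using CQS unfolding is_CQS_def by (elim conjE) assumption
  then show ?thesis
    using assms by simp
qed

lemma CQS_triple_in_hole:
  assumes "T \<subseteq> X" "card T = 3" "G \<in> Gs" "T \<subseteq> S \<union> G" "a \<in> A"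
  shows "\<not> T \<subseteq> a"
proof -
  have "\<forall>T. T \<subseteq> X \<and> card T = 3 \<and> (\<exists>G\<in>Gs. T \<subseteq> S \<union> G) \<longrightarrow> \<not> (\<exists>a\<in>A. T \<subseteq> a)"
    using CQS unfolding is_CQS_def by (elim conjE) assumption
  then show ?thesis
    using assms by blast
qed

lemma group_subset: "G \<in> Gs \<Longrightarrow> G \<subseteq> X - S"
  using groups by (auto simp: is_group_partition_def)

lemma groups_disjoint: "G \<in> Gs \<Longrightarrow> G' \<in> Gs \<Longrightarrow> G \<noteq> G' \<Longrightarrow> G \<inter> G' = {}"
  using groups by (auto simp: is_group_partition_def pairwise_def disjnt_def)

lemma hole_SQS: "G \<in> Gs \<Longrightarrow> is_SQS (g + 2) (S \<union> G) (C G)"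
  using hole_RDSQS by (simp add: is_RDSQS_def)

lemma hole_block: "G \<in> Gs \<Longrightarrow> a \<in> C G \<Longrightarrow> a \<subseteq> S \<union> G \<and> card a = 4"
  using hole_SQS by (simp add: is_SQS_def)

lemma parameters_pos:
  assumes "G \<in> Gs"
  shows "0 < g" "0 < n"
proof -
  have "G \<noteq> {}" "card G = g" "finite Gs" "card Gs = n"
    using groups assms by (auto simp: is_group_partition_def)
  moreover have "finite G"
    using group_subset[OF assms] finite_X finite_subset by blast
  ultimately show "0 < g" "0 < n"
    using assms by (auto simp: card_gt_0_iff)
qed

lemma card_X: "card X = g * n + 2"
proof -
  have "card (X - S) = card (\<Union>Gs)"
    using groups by (simp add: is_group_partition_def)
  also have "\<dots> = sum card Gs"
    using groups group_subset finite_X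
    by (intro card_Union_disjoint) (auto simp: is_group_partition_def intro: finite_subset)
  also have "\<dots> = g * n"
    using groups by (simp add: is_group_partition_def)
  finally show ?thesis
    using card_S S_subset finite_X card_Diff_subset[of S X] card_mono[of X S]
    by (simp add: finite_subset)
qed

lemma triple_in_unique_hole:
  assumes "G \<in> Gs" "G' \<in> Gs" "T \<subseteq> S \<union> G" "T \<subseteq> S \<union> G'" "card T = 3"
  shows "G = G'"
proof (rule ccontr)
  assume "G \<noteq> G'"
  then have "T \<subseteq> S"
    using assms groups_disjoint by blast
  then have "card T \<le> 2"
    using card_S card_mono finite_X S_subset finite_subset by metis
  then show False
    using assms(5) by simp
qed

lemma filled_SQS: "is_SQS (g * n + 2) X filled"
proof -
  have "\<exists>!a. a \<in> filled \<and> T \<subseteq> a" if T: "T \<subseteq> X" "card T = 3" for T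
  proof (cases "\<exists>G\<in>Gs. T \<subseteq> S \<union> G")
    case True
    then obtain G where G: "G \<in> Gs" "T \<subseteq> S \<union> G"
      by blast
    have "a \<in> filled \<and> T \<subseteq> a \<longleftrightarrow> a \<in> C G \<and> T \<subseteq> a" for a
    proof
      assume a: "a \<in> filled \<and> T \<subseteq> a"
      then have "a \<notin> A"
        using CQS_triple_in_hole[OF T G] by blast
      then obtain G' where "G' \<in> Gs" "a \<in> C G'"
        using a unfolding filled_def by blast
      moreover have "G' = G"
        using calculation a hole_block triple_in_unique_hole[OF _ G(1) _ G(2) T(2)] by blast
      ultimately show "a \<in> C G \<and> T \<subseteq> a"
        using a by blast
    qed (use G(1) in \<open>auto simp: filled_def\<close>)
    moreover have "\<exists>!a. a \<in> C G \<and> T \<subseteq> a"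
      using hole_SQS[OF G(1)] G(2) T(2) by (simp add: is_SQS_def)
    ultimately show ?thesis
      by simp
  next
    case False
    then have no_hole: "\<forall>G\<in>Gs. \<not> T \<subseteq> S \<union> G"
      by blast
    then have "a \<in> filled \<and> T \<subseteq> a \<longleftrightarrow> a \<in> A \<and> T \<subseteq> a" for a
      using hole_block unfolding filled_def by blast
    moreover have "\<exists>!a. a \<in> A \<and> T \<subseteq> a"
      by (rule CQS_triple_unique[OF T no_hole])
    ultimately show ?thesis
      by simp
  qed
  moreover have "a \<subseteq> X \<and> card a = 4" if "a \<in> filled" for a
    using that CQS_block hole_block group_subset S_subset unfolding filled_def by blast
  ultimately show ?thesis
    using finite_X card_X by (simp add: is_SQS_def)
qed

lemma derived_filled: "derived filled x = derived A x \<union> (\<Union>G\<in>Gs. derived (C G) x)"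
  unfolding filled_def derived_def by blast

lemma derived_filled_in_group:
  assumes "G \<in> Gs" "x \<in> G"
  shows "derived filled x = derived A x \<union> derived (C G) x"
proof -
  have "derived (C G') x = {}" if "G' \<in> Gs" "G' \<noteq> G" for G'
    using that assms groups_disjoint group_subset hole_block unfolding derived_def by blast
  then show ?thesis
    unfolding derived_filled using assms by blast
qed

lemma hole_resolution:
  assumes "G \<in> Gs" "x \<in> S \<union> G"
  shows "\<exists>\<rho>. (\<forall>i<g div 2. is_PPC (S \<union> G - {x}) (\<rho> i)) \<and> derived (C G) x = (\<Union>i<g div 2. \<rho> i)"
proof (rule resolution_enumeration)
  show "is_STS (S \<union> G - {x}) (derived (C G) x)"
    using derived_STS[OF hole_SQS[OF assms(1)] assms(2)] .
  show "resolvable (S \<union> G - {x}) (derived (C G) x)"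
    using hole_RDSQS[OF assms(1)] assms(2) by (simp add: is_RDSQS_def)
  show "card (S \<union> G - {x}) = 2 * (g div 2) + 1"
    using CQS_hole_card[OF CQS assms(1)] assms(2) even_g by simp
qed

lemma PPC_partition_derived_at_S:
  assumes "x \<in> S" "is_gcGDD g n (X - S) Gs (derived A x) H" "n * (g div 2) + 1 \<le> k"
  shows "PPC_partition (X - {x}) (derived filled x) k"
proof -
  obtain P Pstar where
    P: "\<forall>G\<in>Gs. \<forall>i<g div 2. P G i \<subseteq> derived A x \<and> is_PPC (X - S - G) (P G i)" and
    Pstar: "is_PPC (X - S - H) Pstar" and
    derived_A: "derived A x = (\<Union>G\<in>Gs. \<Union>i\<in>{..<g div 2}. P G i) \<union> Pstar"
    using assms(2) unfolding is_gcGDD_def by (elim conjE exE) blast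
  have "\<forall>G\<in>Gs. \<exists>\<rho>. (\<forall>i<g div 2. is_PPC (S \<union> G - {x}) (\<rho> i)) \<and>
      derived (C G) x = (\<Union>i<g div 2. \<rho> i)"
    using hole_resolution assms(1) by blast
  then obtain \<rho> where
    \<rho>: "\<forall>G\<in>Gs. \<forall>i<g div 2. is_PPC (S \<union> G - {x}) (\<rho> G i)" and
    derived_C: "\<forall>G\<in>Gs. derived (C G) x = (\<Union>i<g div 2. \<rho> G i)"
    by metis
  define classes where
    "classes = insert Pstar ((\<lambda>(G, i). P G i \<union> \<rho> G i) ` (Gs \<times> {..<g div 2}))"
  have "finite Gs" "card Gs = n"
    using groups by (auto simp: is_group_partition_def)
  show ?thesis
  proof (rule PPC_partition_cover[of classes])
    show "finite classes"
      unfolding classes_def using \<open>finite Gs\<close> by simp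
    have "card classes \<le> card ((\<lambda>(G, i). P G i \<union> \<rho> G i) ` (Gs \<times> {..<g div 2})) + 1"
      unfolding classes_def using \<open>finite Gs\<close> by (simp add: card_insert_if)
    also have "\<dots> \<le> card (Gs \<times> {..<g div 2}) + 1"
      using \<open>finite Gs\<close> card_image_le[of "Gs \<times> {..<g div 2}"] by simp
    finally show "card classes \<le> k"
      using \<open>card Gs = n\<close> assms(3) by (simp add: card_cartesian_product)
    have "is_PPC (X - {x}) (P G i \<union> \<rho> G i)" if "G \<in> Gs" "i < g div 2" for G i
    proof (rule is_PPC_mono)
      show "is_PPC ((X - S - G) \<union> (S \<union> G - {x})) (P G i \<union> \<rho> G i)"
        using P \<rho> that by (intro is_PPC_Un) auto
      show "(X - S - G) \<union> (S \<union> G - {x}) \<subseteq> X - {x}"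
        using assms(1) S_subset group_subset[OF that(1)] by blast
    qed
    moreover have "is_PPC (X - {x}) Pstar"
      by (rule is_PPC_mono[OF Pstar]) (use assms(1) in blast)
    ultimately show "\<forall>P'\<in>classes. is_PPC (X - {x}) P'"
      unfolding classes_def by auto
    show "derived filled x \<subseteq> \<Union>classes"
      unfolding derived_filled derived_A classes_def using derived_C by fastforce
  qed
qed

lemma PPC_partition_derived_in_group:
  assumes "G \<in> Gs" "x \<in> G"
    and gc: "is_gcSTS (g * n + 1) (g + 1) (X - {x}) (G \<union> S - {x}) (derived A x)"
    and chi: "g * n \<le> 2 * chi' (g * n + 1)"
  shows "PPC_partition (X - {x}) (derived filled x) (chi' (g * n + 1))"
proof -
  define k where "k = chi' (g * n + 1)"
  define q where "q = g div 2"
  define d where "d = (g * n + 1 - (g + 1)) div 2"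
  obtain f where
    f: "\<forall>b\<in>derived A x. f b < k" and
    f_PPC: "\<forall>i<k. is_PPC (X - {x}) {b\<in>derived A x. f b = i}" and
    f_off_hole: "\<forall>i < k - d. is_PPC (X - {x} - (G \<union> S - {x})) {b\<in>derived A x. f b = i}"
    using gc unfolding is_gcSTS_def k_def d_def by (elim conjE exE) blast
  have "g = 2 * q" "0 < n"
    using even_g parameters_pos[OF assms(1)] unfolding q_def by simp_all
  then have "d = q * n - q" "q \<le> q * n" "q * n \<le> k"
    using chi unfolding d_def k_def by (simp_all add: diff_mult_distrib2)
  \<comment> \<open>The gcSTS has at least g/2 colour classes avoiding the hole, one for each of its parallel classes.\<close>
  then have "q \<le> k - d"
    by linarith
  obtain \<rho> where
    \<rho>: "\<forall>i<q. is_PPC (S \<union> G - {x}) (\<rho> i)" and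
    derived_C: "derived (C G) x = (\<Union>i<q. \<rho> i)"
    using hole_resolution[OF assms(1)] assms(2) unfolding q_def by blast
  define merged where
    "merged i = {b\<in>derived A x. f b = i} \<union> (if i < q then \<rho> i else {})" for i
  show ?thesis
    unfolding k_def[symmetric]
  proof (rule PPC_partition_cover[of "merged ` {..<k}"])
    show "finite (merged ` {..<k})" "card (merged ` {..<k}) \<le> k"
      using card_image_le[of "{..<k}" merged] by simp_all
    have "is_PPC (X - {x}) (merged i)" if "i < k" for i
    proof (cases "i < q")
      case True
      have "X - {x} - (G \<union> S - {x}) = X - S - G"
        using assms(2) by blast
      then have "is_PPC (X - S - G) {b\<in>derived A x. f b = i}"
        using True f_off_hole \<open>q \<le> k - d\<close> by simp
      then have "is_PPC ((X - S - G) \<union> (S \<union> G - {x})) ({b\<in>derived A x. f b = i} \<union> \<rho> i)"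
        using True \<rho> by (intro is_PPC_Un) auto
      then have "is_PPC ((X - S - G) \<union> (S \<union> G - {x})) (merged i)"
        unfolding merged_def using True by simp
      then show ?thesis
        by (rule is_PPC_mono) (use assms(2) S_subset group_subset[OF assms(1)] in blast)
    next
      case False
      then show ?thesis
        unfolding merged_def using f_PPC that by simp
    qed
    then show "\<forall>P\<in>merged ` {..<k}. is_PPC (X - {x}) P"
      by blast
    show "derived filled x \<subseteq> \<Union>(merged ` {..<k})"
    proof
      fix b assume "b \<in> derived filled x"
      then consider "b \<in> derived A x" | i where "i < q" "b \<in> \<rho> i"
        unfolding derived_filled_in_group[OF assms(1,2)] derived_C by blast
      then show "b \<in> \<Union>(merged ` {..<k})"
      proof cases
        case 1
        then show ?thesis
          using f unfolding merged_def by blast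
      next
        case 2
        then show ?thesis
          using \<open>q \<le> k - d\<close> unfolding merged_def by force
      qed
    qed
  qed
qed

lemma filled_mcDSQS:
  assumes gcSTS: "\<forall>G\<in>Gs. \<forall>x\<in>G. is_gcSTS (g * n + 1) (g + 1) (X - {x}) (G \<union> S - {x}) (derived A x)"
    and gcGDD: "\<forall>x\<in>S. is_gcGDD g n (X - S) Gs (derived A x) H"
    and chi: "g * n + 2 \<le> 2 * chi' (g * n + 1)"
  shows "is_mcDSQS (g * n + 2) X filled"
proof -
  have "PPC_partition (X - {x}) (derived filled x) (chi' (g * n + 1))" if x: "x \<in> X" for x
  proof (cases "x \<in> S")
    case True
    have "g * n = 2 * (n * (g div 2))"
      using even_g by (auto elim!: evenE)
    then have "n * (g div 2) + 1 \<le> chi' (g * n + 1)"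
      using chi by linarith
    then show ?thesis
      using PPC_partition_derived_at_S True gcGDD by blast
  next
    case False
    then obtain G where "G \<in> Gs" "x \<in> G"
      using x groups by (auto simp: is_group_partition_def)
    then show ?thesis
      using PPC_partition_derived_in_group gcSTS chi by simp
  qed
  then show ?thesis
    using filled_SQS derived_STS[OF filled_SQS] finite_X card_X
    by (auto simp: is_mcDSQS_def is_mcSTS_def)
qed

end

lemma chi'_filled_lower_bound:
  assumes "CQS_filling g n (X :: nat set) S Gs A C" "n mod 3 = 0" "G \<in> Gs"
  shows "g * n + 2 \<le> 2 * chi' (g * n + 1)"
proof -
  interpret CQS_filling g n X S Gs A C
    by fact
  obtain s where "s \<in> X"
    using card_X by fastforce
  have "g * n mod 6 = 0"
    using assms(2) even_g by (auto elim!: evenE simp: mult.assoc)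
  then have "(g * n + 1) mod 6 = 1"
    by presburger
  moreover have "0 < g * n"
    using parameters_pos[OF assms(3)] by simp
  moreover have "card (X - {s}) = g * n + 1"
    using card_X finite_X \<open>s \<in> X\<close> by simp
  ultimately show ?thesis
    using chi'_lower_bound[OF derived_STS[OF filled_SQS \<open>s \<in> X\<close>]] by simp
qed

theorem mainTheorem15:
  fixes g n :: nat
  assumes "n mod 3 = 0"
    and "\<exists>(X :: nat set) S Gs A. is_1cDCQS g n X S Gs A"
    and "\<exists>(Y :: nat set) A'. is_RDSQS (g + 2) Y A'"
  shows "\<exists>(X :: nat set) A. is_mcDSQS (g * n + 2) X A"
proof -
  obtain X :: "nat set" and S Gs A H where
    even: "even g" and CQS: "is_CQS g n 2 X S Gs A" and
    gcSTS: "\<forall>G\<in>Gs. \<forall>x\<in>G. is_gcSTS (g * n + 1) (g + 1) (X - {x}) (G \<union> S - {x}) (derived A x)" and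
    H: "H \<in> Gs" and gcGDD: "\<forall>x\<in>S. is_gcGDD g n (X - S) Gs (derived A x) H"
    using assms(2) unfolding is_1cDCQS_def by blast
  obtain Y :: "nat set" and A' where "is_RDSQS (g + 2) Y A'"
    using assms(3) by blast
  then have "\<forall>G\<in>Gs. \<exists>C. is_RDSQS (g + 2) (S \<union> G) C"
    using ex_RDSQS_on CQS_hole_card[OF CQS] by blast
  then obtain C where "\<And>G. G \<in> Gs \<Longrightarrow> is_RDSQS (g + 2) (S \<union> G) (C G)"
    by metis
  then have filling: "CQS_filling g n X S Gs A C"
    using CQS even by unfold_locales
  then have "is_mcDSQS (g * n + 2) X (CQS_filling.filled Gs A C)"
    using CQS_filling.filled_mcDSQS gcSTS gcGDD chi'_filled_lower_bound[OF filling assms(1) H]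
    by blast
  then show ?thesis
    by blast
qed

end
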